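(* In the setting below, for all $r>0$ and all $m\in\mathbb{N}$: $$\mathbb{E}\big[\mathbb{I}_{B_r}(X^x_m)|\eta(X^x_m)-\eta(x)|\big]\le m\,\mathbb{E}\big[\mathbb{I}_{B_r}(X)|\eta(X)-\eta(x)|\big],$$ $$\mathbb{E}\big[\mathbb{I}_{S_r}(X^x_m)|\eta(X^x_m)-\eta(x)|\big]\le 2\|\eta\|_\infty\, m\,\mathbb{P}_X(S_r)\exp\big(-(m-1)\mathbb{P}_X(B_r)\big),$$ $$\mathbb{E}\big[\mathbb{I}_{\mathcal{X}\setminus\bar B_r}(X^x_m)|\eta(X^x_m)-\eta(x)|\big]\le 2\|\eta\|_\infty\exp\big(-m\,\mathbb{P}_X(\bar B_r)\big).$$
   Context: Let $(\mathcal{X},d)$ be a metric space with its Borel $\sigma$-algebra, let $(\Omega,\mathcal{F},\mathbb{P})$ be a probability space, and let $X,X_1,X_2,\dots$ be i.i.d. $\mathcal{X}$-valued random variables with common law $\mathbb{P}_X$. For $x\in\mathcal{X}$ and $r>0$ write $B_r=\{x':d(x,x')<r\}$, $\bar B_r=\{x':d(x,x')\le r\}$ and $S_r=\{x':d(x,x')=r\}$. The support of $\mathbb{P}_X$ is the set of $x$ such that $\mathbb{P}_X(\bar B_r(x))>0$ for all $r>0$. Fix $x$ in the support of $\mathbb{P}_X$ and a bounded measurable $\eta:\mathcal{X}\to\mathbb{R}$, with $\|\eta\|_\infty$ its supremum norm. For each $m\in\mathbb{N}$, a nearest neighbor of $x$ among $X_1,\dots,X_m$ is a measurable $X^x_m:\Omega\to\mathcal{X}$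 with $X^x_m(\omega)\in\arg\min_{x'\in\{X_1(\omega),\dots,X_m(\omega)\}}d(x,x')$ for every $\omega\in\Omega$; fix such a sequence $(X^x_m)_{m\in\mathbb{N}}$. *)

theory Defs
  imports "HOL-Probability.Probability"
begin

definition sup_norm :: "('a \<Rightarrow> real) \<Rightarrow> real" where
  "sup_norm f = (SUP y. \<bar>f y\<bar>)"

end

theory Submission
  imports Defs
begin

text \<open>
  The nearest neighbour is always one of the sample points, which gives the first bound by
  summing over the sample. If it lies outside the closed ball, then so do all \<open>m\<close> sample points,
  an event of probability \<open>(1 - p)\<^sup>m \<le> exp (- m p)\<close> by independence. If it lies on the sphere,
  then some sample point lies on the sphere while all the others avoid the open ball, and a
  union bound over that point gives \<open>m P(S) (1 - P(B))^(m - 1)\<close>. In the last two cases the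
  integrand is bounded by \<open>2 \<parallel>\<eta>\<parallel>\<^sub>\<infinity>\<close> times the indicator of the event.
\<close>

lemma borel_sphere [measurable]: "sphere x r \<in> sets borel"
proof -
  have "sphere x r = cball x r - ball x r"
    by auto
  then show ?thesis
    by simp
qed

lemma abs_le_sup_norm:
  assumes "bounded (range f)"
  shows "\<bar>f y\<bar> \<le> sup_norm f"
proof -
  obtain B where "\<And>z. \<bar>f z\<bar> \<le> B"
    using assms unfolding bounded_iff by auto
  then have "bdd_above (range (\<lambda>z. \<bar>f z\<bar>))"
    by (intro bdd_aboveI2) auto
  then show ?thesis
    unfolding sup_norm_def by (intro cSUP_upper) auto
qed

lemma abs_diff_le_sup_norm:
  assumes "bounded (range f)"
  shows "\<bar>f y - f z\<bar> \<le> 2 * sup_norm f"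
  using abs_le_sup_norm[OF assms, of y] abs_le_sup_norm[OF assms, of z] by linarith

lemma one_minus_power_le_exp:
  fixes p :: real
  assumes "p \<le> 1"
  shows "(1 - p) ^ n \<le> exp (- real n * p)"
proof -
  have "(1 - p) ^ n \<le> exp (- p) ^ n"
    using assms exp_ge_add_one_self[of "- p"] by (intro power_mono) auto
  then show ?thesis
    by (simp add: exp_of_nat_mult[symmetric])
qed

lemma (in prob_space) expectation_indicator_mult_le:
  fixes h :: "'b \<Rightarrow> real"
  assumes Y: "Y \<in> measurable M N" and S: "S \<in> sets N" and h: "h \<in> borel_measurable N"
    and bound: "\<And>y. \<bar>h y\<bar> \<le> C"
  shows "expectation (\<lambda>\<omega>. indicator S (Y \<omega>) * h (Y \<omega>)) \<le> C * prob {\<omega> \<in> space M. Y \<omega> \<in> S}"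
proof -
  let ?E = "{\<omega> \<in> space M. Y \<omega> \<in> S}"
  have E: "?E \<in> events"
    using measurable_sets[OF Y S] by (simp add: vimage_def Int_def conj_commute)
  have "integrable M (\<lambda>\<omega>. indicator S (Y \<omega>) * h (Y \<omega>))"
    by (rule integrable_const_bound[where B = C])
       (use Y S h bound in \<open>auto simp: indicator_def abs_mult intro: order_trans[OF _ bound]\<close>)
  moreover have "integrable M (\<lambda>\<omega>. C * indicator ?E \<omega>)"
    using E by (intro integrable_mult_right integrable_real_indicator) (auto simp: less_top[symmetric])
  ultimately have "expectation (\<lambda>\<omega>. indicator S (Y \<omega>) * h (Y \<omega>)) \<le> expectation (\<lambda>\<omega>. C * indicator ?E \<omega>)"
    using bound by (intro integral_mono) (auto simp: indicator_def abs_le_iff)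
  also have "\<dots> = C * prob ?E"
    using E by simp
  finally show ?thesis .
qed

locale nearest_neighbour = prob_space M for M :: "'w measure" +
  fixes \<mu> :: "'a::metric_space measure" and Xs :: "nat \<Rightarrow> 'w \<Rightarrow> 'a" and m :: nat
    and x :: 'a and NN :: "'w \<Rightarrow> 'a"
  assumes indep_Xs: "indep_vars (\<lambda>_. borel) Xs {1..m}"
    and distr_Xs: "\<And>i. i \<in> {1..m} \<Longrightarrow> distr M borel (Xs i) = \<mu>"
    and measurable_NN: "NN \<in> measurable M borel"
    and NN_arg_min: "\<And>\<omega>. \<omega> \<in> space M \<Longrightarrow>
      is_arg_min (dist x) (\<lambda>y. y \<in> {Xs i \<omega> | i. i \<in> {1..m}}) (NN \<omega>)"
begin

lemma measurable_Xs: "i \<in> {1..m} \<Longrightarrow> Xs i \<in> measurable M borel"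
  using indep_Xs unfolding indep_vars_def2 by blast

lemma NN_in_sample: "\<omega> \<in> space M \<Longrightarrow> \<exists>i\<in>{1..m}. NN \<omega> = Xs i \<omega>"
  using NN_arg_min unfolding is_arg_min_def by blast

lemma dist_NN_le: "\<omega> \<in> space M \<Longrightarrow> i \<in> {1..m} \<Longrightarrow> dist x (NN \<omega>) \<le> dist x (Xs i \<omega>)"
  using NN_arg_min unfolding is_arg_min_def by (metis (mono_tags, lifting) mem_Collect_eq not_le)

lemma sample_size_pos: "m \<ge> 1"
  using NN_in_sample not_empty by fastforce

lemma prob_space_\<mu>: "prob_space \<mu>"
  using prob_space_distr[OF measurable_Xs, of 1] distr_Xs[of 1] sample_size_pos by simp

lemma space_\<mu>: "space \<mu> = UNIV" and sets_\<mu>: "sets \<mu> = sets borel"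
  using distr_Xs[of 1] sample_size_pos by (auto dest: sym)

lemma measure_\<mu>_compl: "A \<in> sets borel \<Longrightarrow> measure \<mu> (UNIV - A) = 1 - measure \<mu> A"
  using prob_space.prob_compl[OF prob_space_\<mu>, of A] by (simp add: space_\<mu> sets_\<mu>)

lemma prob_sample_Inter:
  assumes "J \<subseteq> {1..m}" "J \<noteq> {}" "\<And>j. j \<in> J \<Longrightarrow> A j \<in> sets borel"
  shows "prob (\<Inter>j\<in>J. Xs j -` A j \<inter> space M) = (\<Prod>j\<in>J. measure \<mu> (A j))"
proof -
  have "prob (\<Inter>j\<in>J. Xs j -` A j \<inter> space M) = (\<Prod>j\<in>J. prob (Xs j -` A j \<inter> space M))"
    using assms finite_subset[OF assms(1)] by (intro indep_varsD[OF indep_Xs]) auto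
  also have "\<dots> = (\<Prod>j\<in>J. measure \<mu> (A j))"
    using assms by (intro prod.cong refl) (auto simp: measure_distr[OF measurable_Xs] distr_Xs[symmetric])
  finally show ?thesis .
qed

lemma expectation_NN_le:
  fixes g :: "'a \<Rightarrow> real"
  assumes g: "g \<in> borel_measurable borel" and g_nonneg: "\<And>y. 0 \<le> g y" and g_le: "\<And>y. g y \<le> B"
  shows "expectation (\<lambda>\<omega>. g (NN \<omega>)) \<le> real m * integral\<^sup>L \<mu> g"
proof -
  have integrable: "integrable M (\<lambda>\<omega>. g (Y \<omega>))" if "Y \<in> measurable M borel" for Y
    by (rule integrable_const_bound[where B = B]) (use that g g_nonneg g_le in auto)
  have "expectation (\<lambda>\<omega>. g (NN \<omega>)) \<le> expectation (\<lambda>\<omega>. \<Sum>i\<in>{1..m}. g (Xs i \<omega>))"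
  proof (rule integral_mono)
    fix \<omega> assume "\<omega> \<in> space M"
    then obtain i where "i \<in> {1..m}" "NN \<omega> = Xs i \<omega>"
      using NN_in_sample by blast
    then show "g (NN \<omega>) \<le> (\<Sum>i\<in>{1..m}. g (Xs i \<omega>))"
      using g_nonneg by (metis finite_atLeastAtMost member_le_sum)
  qed (use integrable measurable_NN measurable_Xs in auto)
  also have "\<dots> = (\<Sum>i\<in>{1..m}. expectation (\<lambda>\<omega>. g (Xs i \<omega>)))"
    using integrable measurable_Xs by (intro Bochner_Integration.integral_sum) auto
  also have "\<dots> = (\<Sum>i\<in>{1..m}. integral\<^sup>L \<mu> g)"
    using g by (intro sum.cong refl) (simp add: integral_distr[OF measurable_Xs, symmetric] distr_Xs)
  finally show ?thesis
    by simp
qed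

lemma prob_NN_outside_cball:
  "prob {\<omega> \<in> space M. NN \<omega> \<in> UNIV - cball x r} \<le> exp (- real m * measure \<mu> (cball x r))"
proof -
  have "prob {\<omega> \<in> space M. NN \<omega> \<in> UNIV - cball x r}
      \<le> prob (\<Inter>j\<in>{1..m}. Xs j -` (UNIV - cball x r) \<inter> space M)"
  proof (rule finite_measure_mono)
    show "{\<omega> \<in> space M. NN \<omega> \<in> UNIV - cball x r} \<subseteq> (\<Inter>j\<in>{1..m}. Xs j -` (UNIV - cball x r) \<inter> space M)"
      using dist_NN_le sample_size_pos by (fastforce simp: dist_commute)
    show "(\<Inter>j\<in>{1..m}. Xs j -` (UNIV - cball x r) \<inter> space M) \<in> events"
      using sample_size_pos measurable_Xs by (intro sets.finite_INT) auto
  qed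
  also have "\<dots> = (1 - measure \<mu> (cball x r)) ^ m"
    using sample_size_pos by (subst prob_sample_Inter) (auto simp: measure_\<mu>_compl)
  also have "\<dots> \<le> exp (- real m * measure \<mu> (cball x r))"
    using prob_space.prob_le_1[OF prob_space_\<mu>] by (intro one_minus_power_le_exp)
  finally show ?thesis .
qed

lemma prob_NN_in_sphere:
  "prob {\<omega> \<in> space M. NN \<omega> \<in> sphere x r}
    \<le> real m * measure \<mu> (sphere x r) * exp (- (real m - 1) * measure \<mu> (ball x r))"
proof -
  define A where "A i j = (if j = i then sphere x r else UNIV - ball x r)" for i j :: nat
  define F where "F i = (\<Inter>j\<in>{1..m}. Xs j -` A i j \<inter> space M)" for i
  have A_borel: "A i j \<in> sets borel" for i j
    unfolding A_def by auto
  have F_events: "F i \<in> events" for i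
    unfolding F_def using sample_size_pos measurable_Xs A_borel by (intro sets.finite_INT) auto
  have "{\<omega> \<in> space M. NN \<omega> \<in> sphere x r} \<subseteq> (\<Union>i\<in>{1..m}. F i)"
  proof
    fix \<omega> assume \<omega>: "\<omega> \<in> {\<omega> \<in> space M. NN \<omega> \<in> sphere x r}"
    then obtain i where "i \<in> {1..m}" "NN \<omega> = Xs i \<omega>"
      using NN_in_sample by blast
    moreover have "\<omega> \<in> F i"
      unfolding F_def A_def using \<omega> calculation dist_NN_le[of \<omega>] by (force simp: dist_commute)
    ultimately show "\<omega> \<in> (\<Union>i\<in>{1..m}. F i)"
      by blast
  qed
  then have "prob {\<omega> \<in> space M. NN \<omega> \<in> sphere x r} \<le> prob (\<Union>i\<in>{1..m}. F i)"
    using F_events by (intro finite_measure_mono) auto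
  also have "\<dots> \<le> (\<Sum>i\<in>{1..m}. prob (F i))"
    using F_events by (intro finite_measure_subadditive_finite) auto
  also have "\<dots> = (\<Sum>i\<in>{1..m}. measure \<mu> (sphere x r) * (1 - measure \<mu> (ball x r)) ^ (m - 1))"
  proof (intro sum.cong refl)
    fix i assume i: "i \<in> {1..m}"
    have "prob (F i) = (\<Prod>j\<in>{1..m}. measure \<mu> (A i j))"
      unfolding F_def using sample_size_pos A_borel by (intro prob_sample_Inter) auto
    also have "\<dots> = measure \<mu> (sphere x r) * (1 - measure \<mu> (ball x r)) ^ (m - 1)"
      using i by (simp add: A_def if_distrib[of "measure \<mu>"] prod.delta_remove measure_\<mu>_compl)
    finally show "prob (F i) = measure \<mu> (sphere x r) * (1 - measure \<mu> (ball x r)) ^ (m - 1)" .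
  qed
  also have "\<dots> = real m * measure \<mu> (sphere x r) * (1 - measure \<mu> (ball x r)) ^ (m - 1)"
    by simp
  also have "\<dots> \<le> real m * measure \<mu> (sphere x r) * exp (- real (m - 1) * measure \<mu> (ball x r))"
    using prob_space.prob_le_1[OF prob_space_\<mu>] by (intro mult_left_mono one_minus_power_le_exp) auto
  finally show ?thesis
    using sample_size_pos by (simp add: of_nat_diff)
qed

end

theorem mainTheorem3:
  fixes M :: "'w measure" and X :: "'w \<Rightarrow> 'a::metric_space"
    and Xs :: "nat \<Rightarrow> 'w \<Rightarrow> 'a" and NN :: "nat \<Rightarrow> 'w \<Rightarrow> 'a"
    and x :: 'a and \<eta> :: "'a \<Rightarrow> real" and r :: real and m :: nat
  assumes "prob_space M"
    and X_meas: "X \<in> measurable M borel"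
    and Xs_meas: "\<And>i. Xs i \<in> measurable M borel"
    and indep: "prob_space.indep_vars M (\<lambda>_. borel) (\<lambda>i. if i = 0 then X else Xs i) UNIV"
    and ident: "\<And>i. i \<ge> 1 \<Longrightarrow> distr M borel (Xs i) = distr M borel X"
    and supp: "\<And>\<rho>. \<rho> > 0 \<Longrightarrow> measure (distr M borel X) (cball x \<rho>) > 0"
    and eta_meas: "\<eta> \<in> borel_measurable borel"
    and eta_bdd: "bounded (range \<eta>)"
    and NN_meas: "\<And>k. k \<ge> 1 \<Longrightarrow> NN k \<in> measurable M borel"
    and NN_min: "\<And>k \<omega>. k \<ge> 1 \<Longrightarrow> \<omega> \<in> space M \<Longrightarrow>
        is_arg_min (dist x) (\<lambda>y. y \<in> {Xs i \<omega> | i. i \<in> {1..k}}) (NN k \<omega>)"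
    and "r > 0" and "m \<ge> 1"
  shows "(prob_space.expectation M (\<lambda>\<omega>. indicator (ball x r) (NN m \<omega>) * \<bar>\<eta> (NN m \<omega>) - \<eta> x\<bar>)
           \<le> real m * prob_space.expectation M (\<lambda>\<omega>. indicator (ball x r) (X \<omega>) * \<bar>\<eta> (X \<omega>) - \<eta> x\<bar>)) \<and>
         (prob_space.expectation M (\<lambda>\<omega>. indicator (sphere x r) (NN m \<omega>) * \<bar>\<eta> (NN m \<omega>) - \<eta> x\<bar>)
           \<le> 2 * sup_norm \<eta> * real m * measure (distr M borel X) (sphere x r)
              * exp (- (real m - 1) * measure (distr M borel X) (ball x r))) \<and>
         (prob_space.expectation M (\<lambda>\<omega>. indicator (UNIV - cball x r) (NN m \<omega>) * \<bar>\<eta> (NN m \<omega>) - \<eta> x\<bar>)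
           \<le> 2 * sup_norm \<eta> * exp (- real m * measure (distr M borel X) (cball x r)))"
proof -
  interpret prob_space M by fact
  have "indep_vars (\<lambda>_. borel) Xs {1..m}"
    using indep_vars_subset[OF indep, of "{1..m}"] by (subst indep_vars_cong) auto
  then interpret nearest_neighbour M "distr M borel X" Xs m x "NN m"
    using ident NN_meas NN_min \<open>m \<ge> 1\<close> by unfold_locales auto
  let ?err = "\<lambda>A y. indicator A y * \<bar>\<eta> y - \<eta> x\<bar>"
  have err_measurable: "?err A \<in> borel_measurable borel" if "A \<in> sets borel" for A
    using that eta_meas by measurable
  have err_le: "\<bar>\<eta> y - \<eta> x\<bar> \<le> 2 * sup_norm \<eta>" for y
    using abs_diff_le_sup_norm[OF eta_bdd] .
  then have sup_norm_nonneg: "0 \<le> 2 * sup_norm \<eta>"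
    using abs_ge_zero order_trans by blast
  have err_bounded: "?err A y \<le> 2 * sup_norm \<eta>" for A y
    using err_le[of y] sup_norm_nonneg by (auto simp: indicator_def)
  have err_prob: "expectation (\<lambda>\<omega>. ?err S (NN m \<omega>)) \<le> 2 * sup_norm \<eta> * prob {\<omega> \<in> space M. NN m \<omega> \<in> S}"
    if "S \<in> sets borel" for S
    using that measurable_NN eta_meas err_le by (intro expectation_indicator_mult_le) auto
  have "expectation (\<lambda>\<omega>. ?err (ball x r) (NN m \<omega>)) \<le> real m * integral\<^sup>L (distr M borel X) (?err (ball x r))"
    by (intro expectation_NN_le[where B = "2 * sup_norm \<eta>"] err_measurable err_bounded) auto
  also have "integral\<^sup>L (distr M borel X) (?err (ball x r)) = expectation (\<lambda>\<omega>. ?err (ball x r) (X \<omega>))"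
    using err_measurable by (intro integral_distr X_meas) auto
  moreover have "expectation (\<lambda>\<omega>. ?err (sphere x r) (NN m \<omega>)) \<le> 2 * sup_norm \<eta> *
      (real m * measure (distr M borel X) (sphere x r) * exp (- (real m - 1) * measure (distr M borel X) (ball x r)))"
    using order_trans[OF err_prob mult_left_mono[OF prob_NN_in_sphere sup_norm_nonneg]]
    by simp
  moreover have "expectation (\<lambda>\<omega>. ?err (UNIV - cball x r) (NN m \<omega>)) \<le>
      2 * sup_norm \<eta> * exp (- real m * measure (distr M borel X) (cball x r))"
    using order_trans[OF err_prob mult_left_mono[OF prob_NN_outside_cball sup_norm_nonneg]] by simp
  ultimately show ?thesis
    by (simp add: mult.assoc)
qed

end
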